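(* Let $T$ be the weighted shift on $\ell^2$ associated to a bounded complex sequence $(a_j)_{j\ge1}$. If both $T$ and its Aluthge transform $\Delta(T)$ are $2$-isometries, then $T$ is an isometry, and in particular $T=\Delta(T)=M(T)$.
   Context: $\ell^2$ has canonical basis $(e_j)_{j\ge1}$; the weighted shift associated to $(a_j)$ is the operator with $Te_j=a_je_{j+1}$. For $T\in B(H)$ with polar decomposition $T=V|T|$ ($|T|=(T^*T)^{1/2}$, $V$ the partial isometry with $\ker V=\ker T$), the Aluthge transform is $\Delta(T)=|T|^{1/2}V|T|^{1/2}$ and the mean transform is $M(T)=\frac12(|T|V+V|T|)$. $T$ is a $2$-isometry if $\|x\|^2-2\|Tx\|^2+\|T^2x\|^2=0$ for all $x\in H$. *)

theory Defs
  imports "HOL-Analysis.Analysis"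
begin

text \<open>Concrete model of the Hilbert space l2 (indexed from 0: e_0, e_1, ...).
  Operators are functions on sequences; only their action on l2 matters.\<close>

definition l2 :: "(nat \<Rightarrow> complex) set" where
  "l2 = {x. summable (\<lambda>j. (cmod (x j))\<^sup>2)}"

definition l2_inner :: "(nat \<Rightarrow> complex) \<Rightarrow> (nat \<Rightarrow> complex) \<Rightarrow> complex" where
  "l2_inner x y = (\<Sum>j. x j * cnj (y j))"

definition l2_norm :: "(nat \<Rightarrow> complex) \<Rightarrow> real" where
  "l2_norm x = sqrt (\<Sum>j. (cmod (x j))\<^sup>2)"

definition bounded_op :: "((nat \<Rightarrow> complex) \<Rightarrow> (nat \<Rightarrow> complex)) \<Rightarrow> bool" where
  "bounded_op A \<longleftrightarrow>
     (\<forall>x\<in>l2. A x \<in> l2) \<and>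
     (\<forall>x\<in>l2. \<forall>y\<in>l2. \<forall>c::complex. A (\<lambda>j. x j + c * y j) = (\<lambda>j. A x j + c * A y j)) \<and>
     (\<exists>C. \<forall>x\<in>l2. l2_norm (A x) \<le> C * l2_norm x)"

definition positive_op :: "((nat \<Rightarrow> complex) \<Rightarrow> (nat \<Rightarrow> complex)) \<Rightarrow> bool" where
  "positive_op A \<longleftrightarrow> bounded_op A \<and>
     (\<forall>x\<in>l2. l2_inner (A x) x \<in> \<real> \<and> 0 \<le> Re (l2_inner (A x) x))"

definition partial_isometry :: "((nat \<Rightarrow> complex) \<Rightarrow> (nat \<Rightarrow> complex)) \<Rightarrow> bool" where
  "partial_isometry V \<longleftrightarrow> bounded_op V \<and>
     (\<forall>x\<in>l2. (\<forall>y\<in>l2. V y = (\<lambda>_. 0) \<longrightarrow> l2_inner x y = 0) \<longrightarrow> l2_norm (V x) = l2_norm x)"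

text \<open>P = |T| = (T^* T)^(1/2): P positive with P^2 = T^* T, i.e. <P P x, y> = <T x, T y>.\<close>
definition is_modulus :: "((nat \<Rightarrow> complex) \<Rightarrow> (nat \<Rightarrow> complex)) \<Rightarrow> ((nat \<Rightarrow> complex) \<Rightarrow> (nat \<Rightarrow> complex)) \<Rightarrow> bool" where
  "is_modulus T P \<longleftrightarrow> positive_op P \<and>
     (\<forall>x\<in>l2. \<forall>y\<in>l2. l2_inner (P (P x)) y = l2_inner (T x) (T y))"

definition is_polar :: "((nat \<Rightarrow> complex) \<Rightarrow> (nat \<Rightarrow> complex)) \<Rightarrow> ((nat \<Rightarrow> complex) \<Rightarrow> (nat \<Rightarrow> complex))
    \<Rightarrow> ((nat \<Rightarrow> complex) \<Rightarrow> (nat \<Rightarrow> complex)) \<Rightarrow> bool" where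
  "is_polar T V P \<longleftrightarrow> is_modulus T P \<and> partial_isometry V \<and>
     (\<forall>x\<in>l2. V x = (\<lambda>_. 0) \<longleftrightarrow> T x = (\<lambda>_. 0)) \<and>
     (\<forall>x\<in>l2. T x = V (P x))"

definition is_pos_sqrt :: "((nat \<Rightarrow> complex) \<Rightarrow> (nat \<Rightarrow> complex)) \<Rightarrow> ((nat \<Rightarrow> complex) \<Rightarrow> (nat \<Rightarrow> complex)) \<Rightarrow> bool" where
  "is_pos_sqrt P Q \<longleftrightarrow> positive_op Q \<and> (\<forall>x\<in>l2. Q (Q x) = P x)"

text \<open>Weighted shift: T e_j = a_j e_(j+1) (0-based indexing).\<close>
definition wshift :: "(nat \<Rightarrow> complex) \<Rightarrow> (nat \<Rightarrow> complex) \<Rightarrow> (nat \<Rightarrow> complex)" where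
  "wshift a x = (\<lambda>j. if j = 0 then 0 else a (j - 1) * x (j - 1))"

definition two_isometry :: "((nat \<Rightarrow> complex) \<Rightarrow> (nat \<Rightarrow> complex)) \<Rightarrow> bool" where
  "two_isometry T \<longleftrightarrow>
     (\<forall>x\<in>l2. (l2_norm x)\<^sup>2 - 2 * (l2_norm (T x))\<^sup>2 + (l2_norm (T (T x)))\<^sup>2 = 0)"

definition isometry_op :: "((nat \<Rightarrow> complex) \<Rightarrow> (nat \<Rightarrow> complex)) \<Rightarrow> bool" where
  "isometry_op T \<longleftrightarrow> (\<forall>x\<in>l2. l2_norm (T x) = l2_norm x)"

end

theory Submission
  imports Defs
begin

text \<open>On basis vectors the 2-isometry identity of a weighted shift with
  weights w reads 1 - 2 |w j|^2 + |w j|^2 |w (j+1)|^2 = 0. For T = wshift a and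
  b j = |a j|^2 this forces either b = 1 identically or b strictly decreasing. In the
  second case |T|^2 is diagonal with distinct entries; |T| and its square root commute
  with it, hence are diagonal, and being positive they are the diagonal square roots.
  Then V is a shift on the basis and the Aluthge transform is the weighted
  shift with weights sgn (a j) sqrt (|a j| |a (j+1)|). Its 2-isometry identity at e 0,
  together with those of T at e 0 and e 1, forces |a 0| = 1, a contradiction. Hence
  |a j| = 1 for all j, so |T| and its square root are the identity and T = V.\<close>

definition l2_single :: "nat \<Rightarrow> complex \<Rightarrow> nat \<Rightarrow> complex" where
  "l2_single m c = (\<lambda>k. if k = m then c else 0)"

lemma suminf_if_eq: "(\<Sum>k. if k = m then f else 0) = (f :: 'a :: {t2_space, comm_monoid_add})"
  using sums_single[of m "\<lambda>_. f"] by (rule sums_unique[symmetric])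

lemma l2_single_in_l2: "l2_single m c \<in> l2"
proof -
  have "(\<lambda>k. (cmod (l2_single m c k))\<^sup>2) = (\<lambda>k. if k = m then (cmod c)\<^sup>2 else 0)"
    by (auto simp: l2_single_def)
  then show ?thesis
    unfolding l2_def by simp
qed

lemma l2_norm_single [simp]: "l2_norm (l2_single m c) = cmod c"
proof -
  have "(\<lambda>k. (cmod (l2_single m c k))\<^sup>2) = (\<lambda>k. if k = m then (cmod c)\<^sup>2 else 0)"
    by (auto simp: l2_single_def)
  then show ?thesis
    unfolding l2_norm_def by (simp add: suminf_if_eq)
qed

lemma l2_inner_single: "l2_inner z (l2_single m c) = z m * cnj c"
proof -
  have "(\<lambda>k. z k * cnj (l2_single m c k)) = (\<lambda>k. if k = m then z m * cnj c else 0)"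
    by (auto simp: l2_single_def)
  then show ?thesis
    unfolding l2_inner_def by (simp add: suminf_if_eq)
qed

lemma scale_l2_single: "(\<lambda>k. c * l2_single m d k) = l2_single m (c * d)"
  by (auto simp: l2_single_def)

lemma wshift_single: "wshift a (l2_single m c) = l2_single (Suc m) (a m * c)"
  by (auto simp: wshift_def l2_single_def fun_eq_iff)

lemma zero_in_l2: "(\<lambda>_. 0) \<in> l2"
  by (simp add: l2_def)

lemma sum_power2_le_twice_square: "(u + v)\<^sup>2 \<le> 2 * u\<^sup>2 + 2 * (v :: real)\<^sup>2"
  using zero_le_power2[of "u - v"] by (simp add: power2_eq_square algebra_simps)

lemma l2_add_scaled:
  assumes "x \<in> l2" "y \<in> l2"
  shows "(\<lambda>j. x j + c * y j) \<in> l2"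
proof -
  have dominant: "summable (\<lambda>j. 2 * (cmod (x j))\<^sup>2 + 2 * (cmod c)\<^sup>2 * (cmod (y j))\<^sup>2)"
    using assms unfolding l2_def by (intro summable_add summable_mult) auto
  have pointwise: "(cmod (x j + c * y j))\<^sup>2 \<le> 2 * (cmod (x j))\<^sup>2 + 2 * (cmod c)\<^sup>2 * (cmod (y j))\<^sup>2"
    for j
  proof -
    have "cmod (x j + c * y j) \<le> cmod (x j) + cmod c * cmod (y j)"
      by (metis norm_mult norm_triangle_ineq)
    then have "(cmod (x j + c * y j))\<^sup>2 \<le> (cmod (x j) + cmod c * cmod (y j))\<^sup>2"
      by (simp add: power_mono)
    also have "\<dots> \<le> 2 * (cmod (x j))\<^sup>2 + 2 * (cmod c * cmod (y j))\<^sup>2"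
      using sum_power2_le_twice_square by blast
    also have "\<dots> = 2 * (cmod (x j))\<^sup>2 + 2 * (cmod c)\<^sup>2 * (cmod (y j))\<^sup>2"
      by (simp add: power_mult_distrib)
    finally show ?thesis .
  qed
  have "summable (\<lambda>j. (cmod (x j + c * y j))\<^sup>2)"
    by (rule summable_comparison_test'[OF dominant, of 0]) (use pointwise in auto)
  then show ?thesis
    unfolding l2_def by simp
qed

lemma bounded_op_linear:
  assumes "bounded_op A" "x \<in> l2" "y \<in> l2"
  shows "A (\<lambda>j. x j + c * y j) = (\<lambda>j. A x j + c * A y j)"
  using assms unfolding bounded_op_def by blast

lemma bounded_op_in_l2:
  assumes "bounded_op A" "x \<in> l2"
  shows "A x \<in> l2"
  using assms unfolding bounded_op_def by blast

lemma bounded_op_zero: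
  assumes "bounded_op A"
  shows "A (\<lambda>_. 0) = (\<lambda>_. 0)"
  using bounded_op_linear[OF assms zero_in_l2 zero_in_l2, of 1] by (simp add: fun_eq_iff)

lemma bounded_op_scale:
  assumes "bounded_op A" "y \<in> l2"
  shows "A (\<lambda>k. c * y k) = (\<lambda>k. c * A y k)"
  using bounded_op_linear[OF assms(1) zero_in_l2 assms(2), of c] bounded_op_zero[OF assms(1)]
  by simp

lemma bounded_op_single:
  assumes "bounded_op A"
  shows "A (l2_single m c) = (\<lambda>k. c * A (l2_single m 1) k)"
proof -
  have "l2_single m c = (\<lambda>k. c * l2_single m 1 k)"
    by (simp add: scale_l2_single)
  then show ?thesis
    using bounded_op_scale[OF assms l2_single_in_l2, of c m] by simp
qed

lemma bounded_op_single_eq: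
  assumes "bounded_op A" "A (l2_single m 1) = l2_single n d"
  shows "A (l2_single m c) = l2_single n (c * d)"
  using bounded_op_single[OF assms(1), of m c] assms(2) by (simp add: scale_l2_single)

lemma positive_op_neg_eigenvector:
  assumes "positive_op A" "z \<in> l2" "A z = (\<lambda>j. - z j)"
  shows "z = (\<lambda>_. 0)"
proof -
  have S: "summable (\<lambda>j. (cmod (z j))\<^sup>2)"
    using assms(2) by (simp add: l2_def)
  have "(\<lambda>j. A z j * cnj (z j)) = (\<lambda>j. complex_of_real (- (cmod (z j))\<^sup>2))"
    using assms(3) by (auto simp: complex_norm_square[symmetric])
  moreover have "(\<lambda>j. complex_of_real (- (cmod (z j))\<^sup>2))
      sums complex_of_real (- (\<Sum>j. (cmod (z j))\<^sup>2))"
    using sums_of_real[OF sums_minus[OF summable_sums[OF S]]] by simp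
  ultimately have "l2_inner (A z) z = complex_of_real (- (\<Sum>j. (cmod (z j))\<^sup>2))"
    unfolding l2_inner_def by (simp add: sums_iff)
  moreover have "0 \<le> Re (l2_inner (A z) z)"
    using assms(1,2) by (simp add: positive_op_def)
  ultimately have "(\<Sum>j. (cmod (z j))\<^sup>2) = 0"
    using suminf_nonneg[OF S] by simp
  then show ?thesis
    using suminf_eq_zero_iff[OF S] by (simp add: fun_eq_iff)
qed

lemma positive_op_involution_eq_id:
  assumes "positive_op A" "y \<in> l2" "A (A y) = y"
  shows "A y = y"
proof -
  have bo: "bounded_op A"
    using assms(1) by (simp add: positive_op_def)
  have Ay: "A y \<in> l2"
    using bounded_op_in_l2[OF bo assms(2)] .
  define z where "z = (\<lambda>j. A y j + (-1) * y j)"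
  have "z \<in> l2"
    unfolding z_def by (rule l2_add_scaled[OF Ay assms(2)])
  moreover have "A z = (\<lambda>j. - z j)"
    using bounded_op_linear[OF bo Ay assms(2), of "-1"] assms(3) unfolding z_def by simp
  ultimately have "z = (\<lambda>_. 0)"
    by (rule positive_op_neg_eigenvector[OF assms(1)])
  then show ?thesis
    by (auto simp: z_def fun_eq_iff)
qed

lemma commuting_with_diagonal_imp_diagonal:
  assumes "bounded_op A" "\<forall>y\<in>l2. W y = (\<lambda>k. \<beta> k * y k)" "inj \<beta>"
    and "A (W (l2_single j 1)) = W (A (l2_single j 1))"
  shows "A (l2_single j 1) = l2_single j (A (l2_single j 1) j)"
proof -
  define f where "f = A (l2_single j 1)"
  have "W (l2_single j 1) = (\<lambda>k. \<beta> j * l2_single j 1 k)"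
    using assms(2) l2_single_in_l2 by (auto simp: l2_single_def)
  moreover have "W f = (\<lambda>k. \<beta> k * f k)"
    using assms(2) bounded_op_in_l2[OF assms(1) l2_single_in_l2] by (simp add: f_def)
  ultimately have "(\<lambda>k. \<beta> j * f k) = (\<lambda>k. \<beta> k * f k)"
    using assms(4) bounded_op_scale[OF assms(1) l2_single_in_l2] by (simp add: f_def)
  then have "f k = 0" if "k \<noteq> j" for k
  proof -
    have "\<beta> j \<noteq> \<beta> k"
      using assms(3) that by (auto dest: injD)
    then show ?thesis
      using fun_cong[OF \<open>(\<lambda>k. \<beta> j * f k) = (\<lambda>k. \<beta> k * f k)\<close>, of k] by simp
  qed
  then show ?thesis
    unfolding f_def[symmetric] by (auto simp: l2_single_def)
qed

lemma positive_op_root_of_diagonal: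
  assumes "positive_op A" "\<forall>y\<in>l2. W y = (\<lambda>k. \<beta> k * y k)" "inj \<beta>"
    and "A (W (l2_single j 1)) = W (A (l2_single j 1))"
    and "A (A (l2_single j 1)) = l2_single j (complex_of_real r)"
  shows "A (l2_single j 1) = l2_single j (complex_of_real (sqrt r))"
proof -
  have bo: "bounded_op A"
    using assms(1) by (simp add: positive_op_def)
  define d where "d = A (l2_single j 1) j"
  have e: "A (l2_single j 1) = l2_single j d"
    unfolding d_def by (rule commuting_with_diagonal_imp_diagonal[OF bo assms(2-4)])
  have "l2_inner (A (l2_single j 1)) (l2_single j 1) \<in> \<real>"
    and "0 \<le> Re (l2_inner (A (l2_single j 1)) (l2_single j 1))"
    using assms(1) l2_single_in_l2 unfolding positive_op_def by blast+
  then obtain t where t: "d = complex_of_real t" "0 \<le> t"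
    by (auto simp: l2_inner_single d_def elim: Reals_cases)
  have "l2_single j (d * d) = l2_single j (complex_of_real r)"
    using assms(5) e bounded_op_single[OF bo, of j d] by (simp add: scale_l2_single)
  then have "d * d = complex_of_real r"
    by (metis l2_single_def)
  then have "t\<^sup>2 = r"
    using t(1) by (simp flip: of_real_mult add: power2_eq_square)
  then have "t = sqrt r"
    using t(2) by (simp add: real_sqrt_unique)
  then show ?thesis
    using e t(1) by simp
qed

lemma wshift_isometric:
  assumes "\<And>j. cmod (a j) = 1" "x \<in> l2"
  shows "l2_norm (wshift a x) = l2_norm x"
proof -
  define f where "f = (\<lambda>j. (cmod (wshift a x j))\<^sup>2)"
  have shifted: "(\<lambda>n. f (Suc n)) = (\<lambda>n. (cmod (x n))\<^sup>2)"
    using assms(1) by (auto simp: f_def wshift_def norm_mult)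
  have "summable f"
    using assms(2) shifted summable_Suc_iff[of f] by (simp add: l2_def)
  then have "suminf f = (\<Sum>n. (cmod (x n))\<^sup>2)"
    using suminf_split_head[of f] shifted by (simp add: f_def wshift_def)
  then show ?thesis
    by (simp add: l2_norm_def f_def)
qed

lemma two_isometry_weights:
  assumes "two_isometry T" "\<And>j c. T (l2_single j c) = wshift w (l2_single j c)"
  shows "1 - 2 * (cmod (w j))\<^sup>2 + (cmod (w j))\<^sup>2 * (cmod (w (Suc j)))\<^sup>2 = 0"
proof -
  have "(l2_norm (l2_single j 1))\<^sup>2 - 2 * (l2_norm (T (l2_single j 1)))\<^sup>2
      + (l2_norm (T (T (l2_single j 1))))\<^sup>2 = 0"
    using assms(1) l2_single_in_l2[of j 1] unfolding two_isometry_def by blast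
  then show ?thesis
    by (simp add: assms(2) wshift_single norm_mult power_mult_distrib mult.commute)
qed

lemma weight_recurrence_pos:
  fixes b :: "nat \<Rightarrow> real"
  assumes "\<And>j. 1 - 2 * b j + b j * b (Suc j) = 0" "\<And>j. 0 \<le> b j"
  shows "0 < b j"
  using assms(1)[of j] assms(2)[of j] by (cases "b j = 0") auto

lemma weight_recurrence_const:
  fixes b :: "nat \<Rightarrow> real"
  assumes "\<And>j. 1 - 2 * b j + b j * b (Suc j) = 0" "b 0 = 1"
  shows "b j = 1"
proof (induction j)
  case (Suc j)
  then show ?case
    using assms(1)[of j] by simp
qed (rule assms(2))

lemma weight_recurrence_inj:
  fixes b :: "nat \<Rightarrow> real"
  assumes rec: "\<And>j. 1 - 2 * b j + b j * b (Suc j) = 0"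
    and pos: "\<And>j. 0 < b j" and "b 0 \<noteq> 1"
  shows "inj b"
proof -
  have "b (Suc j) < b j" for j
  proof -
    have "b j \<noteq> 1"
    proof (induction j)
      case (Suc j)
      then show ?case
        using rec[of j] by auto
    qed (rule assms(3))
    then have "0 < (b j - 1)\<^sup>2"
      by simp
    also have "(b j - 1)\<^sup>2 = b j * (b j - b (Suc j))"
      using rec[of j] by (simp add: power2_eq_square algebra_simps)
    finally show ?thesis
      using pos[of j] by (simp add: zero_less_mult_iff)
  qed
  then have "strict_mono (\<lambda>j. - b j)"
    by (simp add: strict_mono_Suc_iff)
  then have "inj (\<lambda>j. - b j)"
    by (rule strict_mono_imp_inj_on)
  then show ?thesis
    by (auto simp: inj_def)
qed

text \<open>The hypotheses are the 2-isometry identities at e 0 and e 1 of the weighted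
  shift with weights r and at e 0 of the one with weights sqrt (r j r (j+1)).\<close>
lemma weight_identities_imp_one:
  fixes r0 r1 r2 :: real
  assumes "r0 > 0"
    and e1: "1 - 2 * r0\<^sup>2 + r0\<^sup>2 * r1\<^sup>2 = 0"
    and e2: "1 - 2 * r1\<^sup>2 + r1\<^sup>2 * r2\<^sup>2 = 0"
    and e3: "1 - 2 * (r0 * r1) + (r0 * r1) * (r1 * r2) = 0"
  shows "r0 = 1"
proof -
  define p where "p = r0 * r1"
  have pp: "p\<^sup>2 = r0\<^sup>2 * r1\<^sup>2"
    by (simp add: p_def power_mult_distrib)
  have h1: "2 * r0\<^sup>2 = p\<^sup>2 + 1"
    using e1 pp by linarith
  have "p * (r1 * r2) = 2 * p - 1"
    using e3 unfolding p_def by linarith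
  then have "(2 * p - 1)\<^sup>2 = p\<^sup>2 * (r1\<^sup>2 * r2\<^sup>2)"
    by (simp flip: power_mult_distrib)
  also have "r1\<^sup>2 * r2\<^sup>2 = 2 * r1\<^sup>2 - 1"
    using e2 by linarith
  finally have h2: "2 * (p\<^sup>2 * r1\<^sup>2) = (2 * p - 1)\<^sup>2 + p\<^sup>2"
    by (simp add: right_diff_distrib)
  have "(p\<^sup>2 + 1) * ((2 * p - 1)\<^sup>2 + p\<^sup>2) = 4 * p\<^sup>2 * (r0\<^sup>2 * r1\<^sup>2)"
    using h1 h2 by (simp flip: h1 h2)
  also have "\<dots> = 4 * p\<^sup>2 * p\<^sup>2"
    using pp by simp
  finally have "(p - 1) ^ 4 = 0"
    \<comment> \<open>(p^2 + 1) ((2p - 1)^2 + p^2) - 4 p^4 = (p - 1)^4\<close>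
    by algebra
  then have "r0\<^sup>2 = 1"
    using h1 by simp
  then show ?thesis
    using assms(1) by (simp add: power2_eq_1_iff)
qed

lemma modulus_wshift_square:
  assumes "is_modulus (wshift a) P" "y \<in> l2"
  shows "P (P y) = (\<lambda>k. complex_of_real ((cmod (a k))\<^sup>2) * y k)"
proof
  fix k
  have "P (P y) k = l2_inner (P (P y)) (l2_single k 1)"
    by (simp add: l2_inner_single)
  also have "\<dots> = l2_inner (wshift a y) (wshift a (l2_single k 1))"
    using assms l2_single_in_l2 by (simp add: is_modulus_def)
  also have "\<dots> = (a k * cnj (a k)) * y k"
    unfolding wshift_single l2_inner_single by (simp add: wshift_def)
  finally show "P (P y) k = complex_of_real ((cmod (a k))\<^sup>2) * y k"
    by (simp only: complex_norm_square)
qed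

lemma modulus_wshift_single:
  assumes "is_modulus (wshift a) P" "inj (\<lambda>k. (cmod (a k))\<^sup>2)"
  shows "P (l2_single j 1) = l2_single j (cmod (a j))"
proof -
  have "P (l2_single j 1) = l2_single j (complex_of_real (sqrt ((cmod (a j))\<^sup>2)))"
  proof (rule positive_op_root_of_diagonal[where W = "\<lambda>y. P (P y)"])
    show "positive_op P"
      using assms(1) by (simp add: is_modulus_def)
    show "\<forall>y\<in>l2. P (P y) = (\<lambda>k. complex_of_real ((cmod (a k))\<^sup>2) * y k)"
      using modulus_wshift_square[OF assms(1)] by blast
    show "inj (\<lambda>k. complex_of_real ((cmod (a k))\<^sup>2))"
      using inj_compose[OF inj_of_real assms(2)] by (simp add: comp_def)
    show "P (P (l2_single j 1)) = l2_single j (complex_of_real ((cmod (a j))\<^sup>2))"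
      using modulus_wshift_square[OF assms(1) l2_single_in_l2] by (auto simp: l2_single_def)
  qed (rule refl)
  then show ?thesis
    by simp
qed

lemma pos_sqrt_modulus_wshift_single:
  assumes "is_modulus (wshift a) P" "is_pos_sqrt P Q" "inj (\<lambda>k. (cmod (a k))\<^sup>2)"
  shows "Q (l2_single j 1) = l2_single j (sqrt (cmod (a j)))"
proof -
  have QQ: "\<forall>y\<in>l2. Q (Q y) = P y"
    using assms(2) by (simp add: is_pos_sqrt_def)
  have P_l2: "P y \<in> l2" if "y \<in> l2" for y
    using assms(1) that by (auto simp: is_modulus_def positive_op_def bounded_op_def)
  have "Q (l2_single j 1) = l2_single j (complex_of_real (sqrt (cmod (a j))))"
  proof (rule positive_op_root_of_diagonal[where W = "\<lambda>y. Q (Q (Q (Q y)))"])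
    show "positive_op Q"
      using assms(2) by (simp add: is_pos_sqrt_def)
    show "\<forall>y\<in>l2. Q (Q (Q (Q y))) = (\<lambda>k. complex_of_real ((cmod (a k))\<^sup>2) * y k)"
      using QQ P_l2 modulus_wshift_square[OF assms(1)] by simp
    show "inj (\<lambda>k. complex_of_real ((cmod (a k))\<^sup>2))"
      using inj_compose[OF inj_of_real assms(3)] by (simp add: comp_def)
    show "Q (Q (l2_single j 1)) = l2_single j (complex_of_real (cmod (a j)))"
      using QQ l2_single_in_l2 modulus_wshift_single[OF assms(1,3)] by simp
  qed (rule refl)
  then show ?thesis
    by simp
qed

lemma polar_wshift_single:
  assumes "is_polar (wshift a) V P" "inj (\<lambda>k. (cmod (a k))\<^sup>2)" "a j \<noteq> 0"
  shows "V (l2_single j 1) = l2_single (Suc j) (sgn (a j))"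
proof -
  have bo: "bounded_op V"
    using assms(1) by (simp add: is_polar_def partial_isometry_def)
  have "l2_single (Suc j) (a j) = wshift a (l2_single j 1)"
    by (simp add: wshift_single)
  also have "\<dots> = V (P (l2_single j 1))"
    using assms(1) l2_single_in_l2 by (simp add: is_polar_def)
  also have "\<dots> = V (l2_single j (cmod (a j)))"
    using assms(1) modulus_wshift_single[OF _ assms(2)] by (simp add: is_polar_def)
  also have "\<dots> = (\<lambda>k. cmod (a j) * V (l2_single j 1) k)"
    by (rule bounded_op_single[OF bo])
  finally have "V (l2_single j 1) k = l2_single (Suc j) (a j) k / cmod (a j)" for k
    using assms(3) by (simp add: fun_eq_iff field_simps)
  then show ?thesis
    by (auto simp: l2_single_def sgn_eq fun_eq_iff)
qed

lemma aluthge_wshift_single: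
  assumes "is_polar (wshift a) V P" "is_pos_sqrt P Q"
    and "inj (\<lambda>k. (cmod (a k))\<^sup>2)" "\<And>k. a k \<noteq> 0"
  shows "Q (V (Q (l2_single j c)))
    = wshift (\<lambda>k. complex_of_real (sqrt (cmod (a k) * cmod (a (Suc k)))) * sgn (a k)) (l2_single j c)"
proof -
  have modulus: "is_modulus (wshift a) P"
    using assms(1) by (simp add: is_polar_def)
  have boQ: "bounded_op Q"
    using assms(2) by (simp add: is_pos_sqrt_def positive_op_def)
  have boV: "bounded_op V"
    using assms(1) by (simp add: is_polar_def partial_isometry_def)
  have Q_single: "Q (l2_single m d) = l2_single m (d * sqrt (cmod (a m)))" for m d
    using bounded_op_single_eq[OF boQ pos_sqrt_modulus_wshift_single[OF modulus assms(2,3)]] .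
  have V_single: "V (l2_single j d) = l2_single (Suc j) (d * sgn (a j))" for d
    using bounded_op_single_eq[OF boV polar_wshift_single[OF assms(1,3,4)]] .
  have "complex_of_real (sqrt (cmod (a j) * cmod (a (Suc j))))
      = complex_of_real (sqrt (cmod (a j))) * complex_of_real (sqrt (cmod (a (Suc j))))"
    by (simp add: real_sqrt_mult)
  then show ?thesis
    unfolding Q_single V_single wshift_single by (simp only: ac_simps)
qed

lemma two_isometric_aluthge_wshift_unimodular:
  assumes "is_polar (wshift a) V P" "is_pos_sqrt P Q"
    and "two_isometry (wshift a)" "two_isometry (\<lambda>x. Q (V (Q x)))"
  shows "cmod (a j) = 1"
proof -
  define b where "b j = (cmod (a j))\<^sup>2" for j
  have rec: "1 - 2 * b j + b j * b (Suc j) = 0" for j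
    using two_isometry_weights[OF assms(3)] by (simp add: b_def)
  have pos: "0 < b j" for j
    by (rule weight_recurrence_pos[where b = b, OF rec]) (simp add: b_def)
  have "b 0 = 1"
  proof (rule ccontr)
    assume "b 0 \<noteq> 1"
    then have "inj b"
      by (rule weight_recurrence_inj[where b = b, OF rec pos])
    moreover have nonzero: "a k \<noteq> 0" for k
      using pos[of k] by (simp add: b_def)
    ultimately have "1 - 2 * (cmod (a 0) * cmod (a 1))
        + (cmod (a 0) * cmod (a 1)) * (cmod (a 1) * cmod (a 2)) = 0"
      using two_isometry_weights[OF assms(4) aluthge_wshift_single[OF assms(1,2)], of 0]
      by (simp add: b_def[abs_def] norm_mult norm_sgn power_mult_distrib numeral_2_eq_2)
    moreover have "1 - 2 * (cmod (a 0))\<^sup>2 + (cmod (a 0))\<^sup>2 * (cmod (a 1))\<^sup>2 = 0"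
      and "1 - 2 * (cmod (a 1))\<^sup>2 + (cmod (a 1))\<^sup>2 * (cmod (a 2))\<^sup>2 = 0"
      using rec[of 0] rec[of 1] by (simp_all add: b_def numeral_2_eq_2)
    ultimately have "cmod (a 0) = 1"
      using weight_identities_imp_one nonzero[of 0] by simp
    then show False
      using \<open>b 0 \<noteq> 1\<close> by (simp add: b_def)
  qed
  then show ?thesis
    using weight_recurrence_const[where b = b, OF rec, of j] norm_ge_zero[of "a j"]
    by (auto simp: b_def power2_eq_1_iff)
qed

lemma modulus_unimodular_wshift_eq_id:
  assumes "is_modulus (wshift a) P" "\<And>j. cmod (a j) = 1" "y \<in> l2"
  shows "P y = y"
  using positive_op_involution_eq_id[of P y] assms modulus_wshift_square[OF assms(1,3)]
  by (simp add: is_modulus_def)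

theorem mainTheorem13:
  fixes a :: "nat \<Rightarrow> complex"
    and V P Q :: "(nat \<Rightarrow> complex) \<Rightarrow> (nat \<Rightarrow> complex)"
  assumes "bounded (range a)"
    and "is_polar (wshift a) V P"
    and "is_pos_sqrt P Q"
    and "two_isometry (wshift a)"
    and "two_isometry (\<lambda>x. Q (V (Q x)))"
  shows "isometry_op (wshift a)
    \<and> (\<forall>x\<in>l2. wshift a x = Q (V (Q x)))
    \<and> (\<forall>x\<in>l2. wshift a x = (\<lambda>j. (P (V x) j + V (P x) j) / 2))"
proof -
  have unimodular: "cmod (a j) = 1" for j
    using two_isometric_aluthge_wshift_unimodular[OF assms(2-5)] .
  have modulus: "is_modulus (wshift a) P" and polar: "\<forall>x\<in>l2. wshift a x = V (P x)"
    and "bounded_op V"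
    using assms(2) by (auto simp: is_polar_def partial_isometry_def)
  have P_id: "P y = y" if "y \<in> l2" for y
    using modulus_unimodular_wshift_eq_id[OF modulus unimodular that] .
  have Q_id: "Q y = y" if "y \<in> l2" for y
    using positive_op_involution_eq_id[of Q y] assms(3) that P_id by (simp add: is_pos_sqrt_def)
  show ?thesis
  proof (intro conjI ballI)
    show "isometry_op (wshift a)"
      using wshift_isometric[OF unimodular] by (simp add: isometry_op_def)
    fix x
    assume "x \<in> l2"
    then have "wshift a x = V x" "V x \<in> l2"
      using polar P_id bounded_op_in_l2[OF \<open>bounded_op V\<close>] by auto
    then show "wshift a x = Q (V (Q x))" "wshift a x = (\<lambda>j. (P (V x) j + V (P x) j) / 2)"
      using \<open>x \<in> l2\<close> P_id Q_id by auto
  qed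
qed

end
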